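(* Fix constants $\gamma\in(0,1]$, $c_1>0$ and $K\ge1$. There exist constants $L_0$ and $K'$ depending only on $\gamma,c_1,K$ such that the following holds for every $L\ge L_0$. Let $d_0,\dots,d_L$ be positive integers and let $A_i(0),A_i\in\mathbb{R}^{d_i\times d_{i-1}}$ ($i\in[L]$) be matrices; write $A_{j:i}=A_j\cdots A_i$ and $A_{j:i}(0)=A_j(0)\cdots A_i(0)$ for $1\le i\le j\le L$. Suppose $\|A_{j:i}(0)\|\le KL^3$ for all $1\le i\le j\le L$, $\|A_{j:i}(0)\|\le e^{-c_1L^\gamma}$ for all $1\le i\le j\le L$ with $j-i\ge L/10$, and $\|A_i-A_i(0)\|\le e^{-0.6c_1L^\gamma}$ for all $i\in[L]$. Then $$\|A_{j:i}\|\le K'L^3\quad\forall\,1\le i\le j\le L,\qquad \|A_{j:i}\|\le K'e^{-c_1L^\gamma}\quad\forall\,1\le i\le j\le L\text{ with }j-i\ge L/4.$$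
   Context: $\|\cdot\|$ denotes the spectral norm; $[L]=\{1,\dots,L\}$. *)

theory Defs
  imports Complex_Main "Jordan_Normal_Form.Matrix"
begin

definition vec_norm2 :: "real vec \<Rightarrow> real" where
  "vec_norm2 v = sqrt (\<Sum>k<dim_vec v. (v $ k)\<^sup>2)"

definition spec_norm :: "real mat \<Rightarrow> real" where
  "spec_norm A = Sup {vec_norm2 (A *\<^sub>v v) | v. v \<in> carrier_vec (dim_col A) \<and> vec_norm2 v = 1}"

text \<open>Ordered product A_{i+k} * ... * A_i; so A_{j:i} = mat_seg A i (j - i) for i \<le> j.\<close>
primrec mat_seg :: "(nat \<Rightarrow> real mat) \<Rightarrow> nat \<Rightarrow> nat \<Rightarrow> real mat" where
  "mat_seg A i 0 = A i"
| "mat_seg A i (Suc k) = A (i + Suc k) * mat_seg A i k"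

end

theory Submission
  imports Defs "HOL-Analysis.L2_Norm" "HOL-Real_Asymp.Real_Asymp"
begin

text \<open>The telescoping identity
  \<open>A_{j:i} - A0_{j:i} = \<Sum>\<^sub>k A_{j:k+1} (A_k - A0_k) A0_{k-1:i}\<close>
  bounds every perturbed product by the unperturbed one plus at most \<open>L\<close> terms of size
  (norm of a shorter perturbed product) \<open>\<cdot> \<epsilon> \<cdot> M\<close>, where \<open>\<epsilon> = exp (-0.6 c\<^sub>1 L\<^sup>\<gamma>)\<close> and
  \<open>M = K L\<^sup>3\<close>. As \<open>2 L M \<epsilon> \<le> 1\<close> for large \<open>L\<close>, induction on the length gives the
  uniform bound \<open>2 M\<close>. In a product of length at least \<open>L/4\<close>, every summand contains a
  factor of length at least \<open>L/10\<close>: an unperturbed one is at most \<open>e = exp (-c\<^sub>1 L\<^sup>\<gamma>)\<close>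
  by hypothesis, a perturbed one at most \<open>e + 2 L M\<^sup>2 \<epsilon>\<close> by the same identity. What remains,
  \<open>2 L\<^sup>2 M\<^sup>3 \<epsilon>\<^sup>2 = O(L\<^sup>1\<^sup>1 exp (-1.2 c\<^sub>1 L\<^sup>\<gamma>))\<close>, is absorbed in \<open>e\<close> for large \<open>L\<close>.\<close>

section \<open>Euclidean and spectral norms\<close>

lemma vec_norm2_eq_L2_set: "vec_norm2 v = L2_set (\<lambda>k. v $ k) {..<dim_vec v}"
  unfolding vec_norm2_def L2_set_def by simp

lemma vec_norm2_nonneg: "0 \<le> vec_norm2 v"
  by (simp add: vec_norm2_eq_L2_set)

lemma vec_norm2_smult: "vec_norm2 (c \<cdot>\<^sub>v v) = \<bar>c\<bar> * vec_norm2 v"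
proof -
  have "(\<Sum>k<dim_vec v. ((c \<cdot>\<^sub>v v) $ k)\<^sup>2) = c\<^sup>2 * (\<Sum>k<dim_vec v. (v $ k)\<^sup>2)"
    by (simp add: sum_distrib_left power_mult_distrib)
  then show ?thesis
    unfolding vec_norm2_def by (simp add: real_sqrt_mult)
qed

lemma vec_norm2_add_le:
  assumes "v \<in> carrier_vec n" "w \<in> carrier_vec n"
  shows "vec_norm2 (v + w) \<le> vec_norm2 v + vec_norm2 w"
proof -
  have "vec_norm2 (v + w) = L2_set (\<lambda>k. v $ k + w $ k) {..<n}"
    using assms unfolding vec_norm2_eq_L2_set by (intro L2_set_cong) auto
  also have "\<dots> \<le> L2_set (\<lambda>k. v $ k) {..<n} + L2_set (\<lambda>k. w $ k) {..<n}"
    by (rule L2_set_triangle_ineq)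
  finally show ?thesis
    using assms by (simp add: vec_norm2_eq_L2_set)
qed

lemma vec_norm2_eq_0_imp_zero: "vec_norm2 v = 0 \<Longrightarrow> v = 0\<^sub>v (dim_vec v)"
  unfolding vec_norm2_eq_L2_set by (intro eq_vecI) (auto simp: L2_set_eq_0_iff)

lemma vec_norm2_unit_vec:
  assumes "i < n"
  shows "vec_norm2 (unit_vec n i) = 1"
proof -
  have "(\<Sum>k<n. ((unit_vec n i :: real vec) $ k)\<^sup>2) = (\<Sum>k<n. if k = i then 1 else 0)"
    by (intro sum.cong) (auto simp: unit_vec_def)
  then show ?thesis
    using assms unfolding vec_norm2_def by simp
qed

lemma bdd_above_spec_norm_set:
  "bdd_above {vec_norm2 (A *\<^sub>v v) | v. v \<in> carrier_vec (dim_col A) \<and> vec_norm2 v = 1}"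
proof -
  let ?B = "\<Sum>i<dim_row A. \<Sum>k<dim_col A. \<bar>A $$ (i, k)\<bar>"
  have "vec_norm2 (A *\<^sub>v v) \<le> ?B" if v: "v \<in> carrier_vec (dim_col A)" "vec_norm2 v = 1" for v
  proof -
    have entry_le_1: "\<bar>v $ k\<bar> \<le> 1" if "k < dim_col A" for k
    proof -
      have "\<bar>v $ k\<bar> \<le> L2_set (\<lambda>k. \<bar>v $ k\<bar>) {..<dim_vec v}"
        using that v by (intro member_le_L2_set) auto
      also have "\<dots> = 1"
        using v(2) unfolding vec_norm2_eq_L2_set L2_set_def by simp
      finally show ?thesis .
    qed
    have "vec_norm2 (A *\<^sub>v v) \<le> (\<Sum>i<dim_row A. \<bar>(A *\<^sub>v v) $ i\<bar>)"
      unfolding vec_norm2_eq_L2_set dim_mult_mat_vec by (rule L2_set_le_sum_abs)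
    also have "\<dots> \<le> ?B"
    proof (intro sum_mono)
      fix i assume i: "i \<in> {..<dim_row A}"
      have "\<bar>(A *\<^sub>v v) $ i\<bar> = \<bar>\<Sum>k<dim_col A. A $$ (i, k) * v $ k\<bar>"
        using i v by (simp add: scalar_prod_def atLeast0LessThan)
      also have "\<dots> \<le> (\<Sum>k<dim_col A. \<bar>A $$ (i, k)\<bar> * \<bar>v $ k\<bar>)"
        by (rule order_trans[OF sum_abs]) (simp add: abs_mult)
      also have "\<dots> \<le> (\<Sum>k<dim_col A. \<bar>A $$ (i, k)\<bar>)"
        by (intro sum_mono) (simp add: mult_left_le entry_le_1)
      finally show "\<bar>(A *\<^sub>v v) $ i\<bar> \<le> (\<Sum>k<dim_col A. \<bar>A $$ (i, k)\<bar>)" .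
    qed
    finally show ?thesis .
  qed
  then show ?thesis
    by (auto simp: bdd_above_def)
qed

lemma spec_norm_ge:
  "v \<in> carrier_vec (dim_col A) \<Longrightarrow> vec_norm2 v = 1 \<Longrightarrow> vec_norm2 (A *\<^sub>v v) \<le> spec_norm A"
  unfolding spec_norm_def by (rule cSup_upper[OF _ bdd_above_spec_norm_set]) auto

lemma spec_norm_nonneg: "0 < dim_col A \<Longrightarrow> 0 \<le> spec_norm A"
  using spec_norm_ge[of "unit_vec (dim_col A) 0" A] vec_norm2_unit_vec[of 0 "dim_col A"]
    vec_norm2_nonneg
  by (metis order_trans unit_vec_carrier)

lemma mult_mat_vec_norm2_le:
  assumes v: "v \<in> carrier_vec (dim_col A)"
  shows "vec_norm2 (A *\<^sub>v v) \<le> spec_norm A * vec_norm2 v"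
proof (cases "vec_norm2 v = 0")
  case True
  then have "A *\<^sub>v v = 0\<^sub>v (dim_row A)"
    using v vec_norm2_eq_0_imp_zero[of v] by (intro eq_vecI) (auto simp: scalar_prod_def)
  then show ?thesis
    using True by (simp add: vec_norm2_def)
next
  case False
  then have pos: "0 < vec_norm2 v"
    using vec_norm2_nonneg[of v] by simp
  let ?u = "(1 / vec_norm2 v) \<cdot>\<^sub>v v"
  have "vec_norm2 ?u = 1"
    using pos by (simp add: vec_norm2_smult)
  then have "vec_norm2 (A *\<^sub>v ?u) \<le> spec_norm A"
    using v by (intro spec_norm_ge) auto
  moreover have "A *\<^sub>v ?u = (1 / vec_norm2 v) \<cdot>\<^sub>v (A *\<^sub>v v)"
    using v by (intro mult_mat_vec[of _ "dim_row A" "dim_col A"]) auto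
  ultimately have "vec_norm2 (A *\<^sub>v v) / vec_norm2 v \<le> spec_norm A"
    using pos by (simp add: vec_norm2_smult)
  then show ?thesis
    using pos by (simp add: divide_le_eq)
qed

lemma spec_norm_leI:
  assumes "0 < dim_col A"
    and "\<And>v. v \<in> carrier_vec (dim_col A) \<Longrightarrow> vec_norm2 (A *\<^sub>v v) \<le> C * vec_norm2 v"
  shows "spec_norm A \<le> C"
  unfolding spec_norm_def
proof (rule cSup_least)
  show "{vec_norm2 (A *\<^sub>v v) | v. v \<in> carrier_vec (dim_col A) \<and> vec_norm2 v = 1} \<noteq> {}"
    using assms(1) vec_norm2_unit_vec[of 0 "dim_col A"] by (auto intro: unit_vec_carrier)
qed (use assms(2) in fastforce)

lemma spec_norm_mult_le:
  assumes A: "A \<in> carrier_mat n m" and B: "B \<in> carrier_mat m p" and "0 < m" "0 < p"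
  shows "spec_norm (A * B) \<le> spec_norm A * spec_norm B"
proof (rule spec_norm_leI)
  show "0 < dim_col (A * B)"
    using B \<open>0 < p\<close> by simp
  fix v :: "real vec"
  assume "v \<in> carrier_vec (dim_col (A * B))"
  then have v: "v \<in> carrier_vec p"
    using B by simp
  have "vec_norm2 ((A * B) *\<^sub>v v) = vec_norm2 (A *\<^sub>v (B *\<^sub>v v))"
    using A B v by simp
  also have "\<dots> \<le> spec_norm A * vec_norm2 (B *\<^sub>v v)"
    using A B v by (intro mult_mat_vec_norm2_le) auto
  also have "\<dots> \<le> spec_norm A * (spec_norm B * vec_norm2 v)"
    using A B v \<open>0 < m\<close> spec_norm_nonneg[of A]
    by (intro mult_left_mono mult_mat_vec_norm2_le) auto
  finally show "vec_norm2 ((A * B) *\<^sub>v v) \<le> spec_norm A * spec_norm B * vec_norm2 v"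
    by simp
qed

lemma spec_norm_add_le:
  assumes A: "A \<in> carrier_mat n m" and B: "B \<in> carrier_mat n m" and "0 < m"
  shows "spec_norm (A + B) \<le> spec_norm A + spec_norm B"
proof (rule spec_norm_leI)
  show "0 < dim_col (A + B)"
    using B \<open>0 < m\<close> by simp
  fix v :: "real vec"
  assume "v \<in> carrier_vec (dim_col (A + B))"
  then have v: "v \<in> carrier_vec m"
    using B by simp
  have "vec_norm2 ((A + B) *\<^sub>v v) = vec_norm2 (A *\<^sub>v v + B *\<^sub>v v)"
    using A B v by (simp add: add_mult_distrib_mat_vec)
  also have "\<dots> \<le> vec_norm2 (A *\<^sub>v v) + vec_norm2 (B *\<^sub>v v)"
    using A B v by (intro vec_norm2_add_le[of _ n]) auto
  also have "\<dots> \<le> spec_norm A * vec_norm2 v + spec_norm B * vec_norm2 v"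
    using A B v by (intro add_mono mult_mat_vec_norm2_le) auto
  finally show "vec_norm2 ((A + B) *\<^sub>v v) \<le> (spec_norm A + spec_norm B) * vec_norm2 v"
    by (simp add: algebra_simps)
qed

lemma spec_norm_one_mat_le: "0 < n \<Longrightarrow> spec_norm (1\<^sub>m n) \<le> 1"
  by (rule spec_norm_leI) auto

lemma spec_norm_telescope:
  assumes H: "\<And>k. k \<le> m \<Longrightarrow> H k \<in> carrier_mat r c" and "0 < c"
  shows "spec_norm (H 0) \<le> spec_norm (H m) + (\<Sum>k<m. spec_norm (H k - H (Suc k)))"
  using H
proof (induction m)
  case (Suc m)
  have Hm: "H m \<in> carrier_mat r c" and HSuc: "H (Suc m) \<in> carrier_mat r c"
    using Suc.prems by auto
  have "H m = H (Suc m) + (H m - H (Suc m))"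
    using Hm HSuc by (intro eq_matI) auto
  then have "spec_norm (H m) \<le> spec_norm (H (Suc m)) + spec_norm (H m - H (Suc m))"
    using Hm HSuc \<open>0 < c\<close> by (metis spec_norm_add_le minus_carrier_mat)
  then show ?case
    using Suc by simp
qed simp

section \<open>Products of consecutive factors\<close>

definition mat_chain :: "nat \<Rightarrow> (nat \<Rightarrow> nat) \<Rightarrow> (nat \<Rightarrow> real mat) \<Rightarrow> bool" where
  "mat_chain L d X \<longleftrightarrow> (\<forall>i\<in>{1..L}. X i \<in> carrier_mat (d i) (d (i - 1)))"

text \<open>\<open>seg_prod d X i n\<close> is the paper's \<open>X_{i+n-1:i}\<close>, a product of \<open>n\<close> factors. Unlike
  \<^const>\<open>mat_seg\<close> it allows the empty product, which the telescoping identity needs at both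
  ends.\<close>

primrec seg_prod :: "(nat \<Rightarrow> nat) \<Rightarrow> (nat \<Rightarrow> real mat) \<Rightarrow> nat \<Rightarrow> nat \<Rightarrow> real mat" where
  "seg_prod d X i 0 = 1\<^sub>m (d (i - 1))"
| "seg_prod d X i (Suc n) = X (i + n) * seg_prod d X i n"

lemma mat_chainD: "mat_chain L d X \<Longrightarrow> 1 \<le> i \<Longrightarrow> i \<le> L \<Longrightarrow> X i \<in> carrier_mat (d i) (d (i - 1))"
  unfolding mat_chain_def by auto

lemma seg_prod_carrier:
  assumes "mat_chain L d X" "1 \<le> i" "i + n \<le> L + 1"
  shows "seg_prod d X i n \<in> carrier_mat (d (i + n - 1)) (d (i - 1))"
  using assms(3)
proof (induction n)
  case (Suc n)
  then show ?case
    using mat_chainD[OF assms(1), of "i + n"] assms(2) by auto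
qed simp

lemma mat_seg_eq_seg_prod:
  assumes "mat_chain L d X" "1 \<le> i" "i + k \<le> L"
  shows "mat_seg X i k = seg_prod d X i (Suc k)"
  using assms(3) by (induction k) (use mat_chainD[OF assms(1,2)] in auto)

lemma seg_prod_Suc_first:
  assumes chain: "mat_chain L d X" and i: "1 \<le> i" and n: "i + n \<le> L"
  shows "seg_prod d X i (Suc n) = seg_prod d X (i + 1) n * X i"
  using n
proof (induction n)
  case 0
  then show ?case
    using mat_chainD[OF chain i] by simp
next
  case (Suc n)
  have "X (i + Suc n) \<in> carrier_mat (d (i + Suc n)) (d (i + n))"
    using mat_chainD[OF chain, of "i + Suc n"] Suc.prems by simp
  moreover have "seg_prod d X (i + 1) n \<in> carrier_mat (d (i + n)) (d i)"
    using seg_prod_carrier[OF chain, of "i + 1" n] Suc.prems by simp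
  moreover have "X i \<in> carrier_mat (d i) (d (i - 1))"
    using mat_chainD[OF chain i] Suc.prems by simp
  ultimately show ?case
    using Suc by simp
qed

lemma spec_norm_seg_prod_nonneg:
  assumes "\<forall>i\<le>L. 0 < d i" "mat_chain L d X" "1 \<le> i" "i + n \<le> L + 1"
  shows "0 \<le> spec_norm (seg_prod d X i n)"
  using seg_prod_carrier[OF assms(2-4)] assms(1,3,4) by (intro spec_norm_nonneg) auto

lemma mult_minus_mult_mat:
  fixes Q a b R :: "'a :: ring mat"
  assumes "Q \<in> carrier_mat n m" "a \<in> carrier_mat m p" "b \<in> carrier_mat m p" "R \<in> carrier_mat p q"
  shows "Q * a * R - Q * (b * R) = Q * (a - b) * R"
proof -
  have "Q * (a - b) * R = (Q * a - Q * b) * R"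
    using assms by (simp add: mult_minus_distrib_mat)
  also have "\<dots> = Q * a * R - Q * b * R"
    using assms by (intro minus_mult_distrib_mat) auto
  finally show ?thesis
    using assms by simp
qed

text \<open>Telescope over the hybrid products \<open>H k = A_{i+n-1:i+k} A0_{i+k-1:i}\<close>; consecutive ones
  differ only in the factor \<open>A_{i+k}\<close> versus \<open>A0_{i+k}\<close>.\<close>

lemma spec_norm_seg_prod_perturbation:
  assumes dpos: "\<forall>i\<le>L. 0 < d i" and A0: "mat_chain L d A0" and A: "mat_chain L d A"
    and close: "\<forall>i\<in>{1..L}. spec_norm (A i - A0 i) \<le> \<epsilon>"
    and i: "1 \<le> i" and n: "i + n \<le> L + 1"
  shows "spec_norm (seg_prod d A i n) \<le> spec_norm (seg_prod d A0 i n) +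
    (\<Sum>k<n. spec_norm (seg_prod d A (i + k + 1) (n - k - 1)) * \<epsilon> * spec_norm (seg_prod d A0 i k))"
proof -
  define H where "H k = seg_prod d A (i + k) (n - k) * seg_prod d A0 i k" for k
  have H_carrier: "H k \<in> carrier_mat (d (i + n - 1)) (d (i - 1))" if "k \<le> n" for k
    using seg_prod_carrier[OF A, of "i + k" "n - k"] seg_prod_carrier[OF A0, of i k] i n that
    unfolding H_def by auto
  have H_ends: "H 0 = seg_prod d A i n" "H n = seg_prod d A0 i n"
    unfolding H_def using seg_prod_carrier[OF A i n] seg_prod_carrier[OF A0 i n] by simp_all
  have H_step: "spec_norm (H k - H (Suc k)) \<le>
      spec_norm (seg_prod d A (i + k + 1) (n - k - 1)) * \<epsilon> * spec_norm (seg_prod d A0 i k)"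
    if k: "k < n" for k
  proof -
    let ?Q = "seg_prod d A (i + k + 1) (n - k - 1)" and ?R = "seg_prod d A0 i k"
    have Q: "?Q \<in> carrier_mat (d (i + n - 1)) (d (i + k))"
      using seg_prod_carrier[OF A, of "i + k + 1" "n - k - 1"] i n k by simp
    have R: "?R \<in> carrier_mat (d (i + k - 1)) (d (i - 1))"
      using seg_prod_carrier[OF A0, of i k] i n k by simp
    have Ak: "A (i + k) \<in> carrier_mat (d (i + k)) (d (i + k - 1))"
      and A0k: "A0 (i + k) \<in> carrier_mat (d (i + k)) (d (i + k - 1))"
      using mat_chainD[OF A] mat_chainD[OF A0] i n k by auto
    have dims: "0 < d (i + k)" "0 < d (i + k - 1)" "0 < d (i - 1)"
      using dpos i n k by auto
    have "seg_prod d A (i + k) (n - k) = ?Q * A (i + k)"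
      using seg_prod_Suc_first[OF A, of "i + k" "n - k - 1"] i n k by (simp add: Suc_diff_Suc)
    then have "H k - H (Suc k) = ?Q * (A (i + k) - A0 (i + k)) * ?R"
      unfolding H_def using mult_minus_mult_mat[OF Q Ak A0k R] by simp
    also have "spec_norm \<dots> \<le> spec_norm (?Q * (A (i + k) - A0 (i + k))) * spec_norm ?R"
      using Q Ak A0k R dims
      by (intro spec_norm_mult_le[of _ "d (i + n - 1)" "d (i + k - 1)" _ "d (i - 1)"]) auto
    also have "\<dots> \<le> spec_norm ?Q * spec_norm (A (i + k) - A0 (i + k)) * spec_norm ?R"
      using Q Ak A0k R dims spec_norm_nonneg[of ?R]
      by (intro mult_right_mono spec_norm_mult_le[of _ _ "d (i + k)" _ "d (i + k - 1)"]) auto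
    also have "\<dots> \<le> spec_norm ?Q * \<epsilon> * spec_norm ?R"
      using Q R dims close i n k spec_norm_nonneg[of ?Q] spec_norm_nonneg[of ?R]
      by (intro mult_right_mono mult_left_mono) auto
    finally show ?thesis .
  qed
  have "spec_norm (H 0) \<le> spec_norm (H n) + (\<Sum>k<n. spec_norm (H k - H (Suc k)))"
    using H_carrier dpos i n by (intro spec_norm_telescope) auto
  also have "\<dots> \<le> spec_norm (H n) +
      (\<Sum>k<n. spec_norm (seg_prod d A (i + k + 1) (n - k - 1)) * \<epsilon> * spec_norm (seg_prod d A0 i k))"
    using H_step by (intro add_left_mono sum_mono) auto
  finally show ?thesis
    unfolding H_ends .
qed

section \<open>The recursive norm estimate\<close>

text \<open>\<open>a i n\<close> and \<open>b i n\<close> stand for the norms of the perturbed and unperturbed products of the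
  \<open>n\<close> factors starting at \<open>i\<close>; the last assumption is the telescoping estimate.\<close>

locale perturbed_products =
  fixes L :: nat and M e \<epsilon> :: real and a b :: "nat \<Rightarrow> nat \<Rightarrow> real"
  assumes a_nonneg: "\<And>i n. 1 \<le> i \<Longrightarrow> i + n \<le> L + 1 \<Longrightarrow> 0 \<le> a i n"
    and b_nonneg: "\<And>i n. 1 \<le> i \<Longrightarrow> i + n \<le> L + 1 \<Longrightarrow> 0 \<le> b i n"
    and b_le: "\<And>i n. 1 \<le> i \<Longrightarrow> i + n \<le> L + 1 \<Longrightarrow> b i n \<le> M"
    and b_le_decay: "\<And>i n. 1 \<le> i \<Longrightarrow> i + n \<le> L + 1 \<Longrightarrow> real L / 10 \<le> real n - 1 \<Longrightarrow> b i n \<le> e"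
    and eps_nonneg: "0 \<le> \<epsilon>"
    and e_nonneg: "0 \<le> e"
    and small: "real L * (2 * M) * \<epsilon> \<le> 1"
    and a_le_b_plus_sum: "\<And>i n. 1 \<le> i \<Longrightarrow> i + n \<le> L + 1 \<Longrightarrow>
      a i n \<le> b i n + (\<Sum>k<n. a (i + k + 1) (n - k - 1) * \<epsilon> * b i k)"
begin

lemma M_nonneg: "0 \<le> M"
  using b_nonneg[of 1 0] b_le[of 1 0] by simp

lemma summand_le:
  assumes "1 \<le> i" "i + n \<le> L + 1" "k < n" "a (i + k + 1) (n - k - 1) \<le> \<alpha>" "b i k \<le> \<beta>"
  shows "a (i + k + 1) (n - k - 1) * \<epsilon> * b i k \<le> \<alpha> * \<epsilon> * \<beta>"
proof (rule mult_mono)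
  show "a (i + k + 1) (n - k - 1) * \<epsilon> \<le> \<alpha> * \<epsilon>"
    using assms(4) eps_nonneg by (rule mult_right_mono)
  have "0 \<le> a (i + k + 1) (n - k - 1)"
    using assms(1-3) by (intro a_nonneg) auto
  then show "0 \<le> \<alpha> * \<epsilon>"
    using assms(4) eps_nonneg by simp
  show "0 \<le> b i k"
    using assms(1-3) by (intro b_nonneg) auto
qed (fact assms(5))

lemma perturbation_sum_le:
  assumes "1 \<le> i" "i + n \<le> L + 1" "0 \<le> s"
    and "\<And>k. k < n \<Longrightarrow> a (i + k + 1) (n - k - 1) * \<epsilon> * b i k \<le> s"
  shows "(\<Sum>k<n. a (i + k + 1) (n - k - 1) * \<epsilon> * b i k) \<le> real L * s"
proof -
  have "(\<Sum>k<n. a (i + k + 1) (n - k - 1) * \<epsilon> * b i k) \<le> real n * s"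
    using sum_bounded_above[of "{..<n}" "\<lambda>k. a (i + k + 1) (n - k - 1) * \<epsilon> * b i k" s] assms(4)
    by simp
  also have "\<dots> \<le> real L * s"
    using assms(1-3) by (intro mult_right_mono) auto
  finally show ?thesis .
qed

lemma a_le_twice_M: "1 \<le> i \<Longrightarrow> i + n \<le> L + 1 \<Longrightarrow> a i n \<le> 2 * M"
proof (induction n arbitrary: i rule: less_induct)
  case (less n)
  have "(\<Sum>k<n. a (i + k + 1) (n - k - 1) * \<epsilon> * b i k) \<le> real L * (2 * M * \<epsilon> * M)"
    using less.prems M_nonneg eps_nonneg
    by (intro perturbation_sum_le summand_le less.IH b_le) auto
  also have "\<dots> = (real L * (2 * M) * \<epsilon>) * M"
    by simp
  also have "\<dots> \<le> M"
    using mult_right_mono[OF small M_nonneg] by simp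
  finally show ?case
    using a_le_b_plus_sum[OF less.prems] b_le[OF less.prems] by simp
qed

lemma a_le_decay_tenth:
  assumes "1 \<le> i" "i + n \<le> L + 1" "real L / 10 \<le> real n - 1"
  shows "a i n \<le> e + real L * (2 * M * \<epsilon> * M)"
proof -
  have "(\<Sum>k<n. a (i + k + 1) (n - k - 1) * \<epsilon> * b i k) \<le> real L * (2 * M * \<epsilon> * M)"
    using assms M_nonneg eps_nonneg
    by (intro perturbation_sum_le summand_le a_le_twice_M b_le) auto
  then show ?thesis
    using a_le_b_plus_sum[OF assms(1,2)] b_le_decay[OF assms] by simp
qed

text \<open>For \<open>L \<ge> 40\<close>, in every summand one of the two products spans at least \<open>L/10\<close>
  layers, so one of the two previous bounds makes it exponentially small.\<close>

lemma a_le_decay_quarter: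
  assumes "1 \<le> i" "i + n \<le> L + 1" "40 \<le> L" "real L / 4 \<le> real n - 1"
  shows "a i n \<le> 5 / 2 * e + 2 * real L ^ 2 * M ^ 3 * \<epsilon> ^ 2"
proof -
  define \<eta> where "\<eta> = e + real L * (2 * M * \<epsilon> * M)"
  have \<eta>_nonneg: "0 \<le> \<eta>"
    unfolding \<eta>_def using e_nonneg eps_nonneg M_nonneg by simp
  have "a (i + k + 1) (n - k - 1) * \<epsilon> * b i k \<le> 2 * M * \<epsilon> * e + \<eta> * \<epsilon> * M" if k: "k < n" for k
  proof (cases "real L / 10 \<le> real k - 1")
    case True
    then have "a (i + k + 1) (n - k - 1) * \<epsilon> * b i k \<le> 2 * M * \<epsilon> * e"
      using assms k by (intro summand_le a_le_twice_M b_le_decay) auto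
    moreover have "0 \<le> \<eta> * \<epsilon> * M"
      using \<eta>_nonneg eps_nonneg M_nonneg by simp
    ultimately show ?thesis
      by linarith
  next
    case False
    then have "real L / 10 \<le> real (n - k - 1) - 1"
      using assms k by simp
    then have "a (i + k + 1) (n - k - 1) * \<epsilon> * b i k \<le> \<eta> * \<epsilon> * M"
      unfolding \<eta>_def using assms k by (intro summand_le a_le_decay_tenth b_le) auto
    moreover have "0 \<le> 2 * M * \<epsilon> * e"
      using e_nonneg eps_nonneg M_nonneg by simp
    ultimately show ?thesis
      by linarith
  qed
  then have "(\<Sum>k<n. a (i + k + 1) (n - k - 1) * \<epsilon> * b i k) \<le> real L * (2 * M * \<epsilon> * e + \<eta> * \<epsilon> * M)"
    using assms \<eta>_nonneg e_nonneg eps_nonneg M_nonneg by (intro perturbation_sum_le) auto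
  also have "\<dots> = (real L * (2 * M) * \<epsilon>) * (3 / 2 * e) + 2 * real L ^ 2 * M ^ 3 * \<epsilon> ^ 2"
    unfolding \<eta>_def by (simp add: algebra_simps power2_eq_square power3_eq_cube)
  also have "\<dots> \<le> 3 / 2 * e + 2 * real L ^ 2 * M ^ 3 * \<epsilon> ^ 2"
    using mult_right_mono[OF small, of "3 / 2 * e"] e_nonneg by simp
  finally show ?thesis
    using a_le_b_plus_sum[OF assms(1,2)] b_le_decay[OF assms(1,2)] assms(4) by simp
qed

end

lemma perturbed_chain_bounds:
  assumes dpos: "\<forall>i\<le>L. 0 < d i" and A0: "mat_chain L d A0" and A: "mat_chain L d A"
    and A0_le: "\<forall>i j. 1 \<le> i \<longrightarrow> i \<le> j \<longrightarrow> j \<le> L \<longrightarrow> spec_norm (mat_seg A0 i (j - i)) \<le> M"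
    and A0_decay: "\<forall>i j. 1 \<le> i \<longrightarrow> i \<le> j \<longrightarrow> j \<le> L \<longrightarrow> real (j - i) \<ge> real L / 10 \<longrightarrow>
      spec_norm (mat_seg A0 i (j - i)) \<le> e"
    and close: "\<forall>i\<in>{1..L}. spec_norm (A i - A0 i) \<le> \<epsilon>"
    and M_ge: "1 \<le> M" and e_nonneg: "0 \<le> e" and eps_nonneg: "0 \<le> \<epsilon>"
    and small: "real L * (2 * M) * \<epsilon> \<le> 1"
    and ij: "1 \<le> i" "i \<le> j" "j \<le> L"
  shows "spec_norm (mat_seg A i (j - i)) \<le> 2 * M"
    and "40 \<le> L \<Longrightarrow> real (j - i) \<ge> real L / 4 \<Longrightarrow>
      spec_norm (mat_seg A i (j - i)) \<le> 5 / 2 * e + 2 * real L ^ 2 * M ^ 3 * \<epsilon> ^ 2"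
proof -
  have A0_seg_eq: "seg_prod d A0 i (Suc k) = mat_seg A0 i k" if "1 \<le> i" "i + Suc k \<le> L + 1" for i k
    using mat_seg_eq_seg_prod[OF A0, of i k] that by simp
  interpret perturbed_products L M e \<epsilon>
    "\<lambda>i n. spec_norm (seg_prod d A i n)" "\<lambda>i n. spec_norm (seg_prod d A0 i n)"
  proof
    fix i n :: nat
    assume i: "1 \<le> i" and n: "i + n \<le> L + 1"
    show "0 \<le> spec_norm (seg_prod d A i n)" "0 \<le> spec_norm (seg_prod d A0 i n)"
      using spec_norm_seg_prod_nonneg[OF dpos _ i n] A A0 by auto
    show "spec_norm (seg_prod d A0 i n) \<le> M"
    proof (cases n)
      case 0
      then show ?thesis
        using spec_norm_one_mat_le[of "d (i - 1)"] dpos i n M_ge by simp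
    next
      case (Suc k)
      then have "seg_prod d A0 i n = mat_seg A0 i (i + k - i)"
        using A0_seg_eq[OF i] n by simp
      then show ?thesis
        using A0_le[rule_format, of i "i + k"] i n Suc by simp
    qed
    show "spec_norm (seg_prod d A0 i n) \<le> e" if "real L / 10 \<le> real n - 1"
    proof (cases n)
      case (Suc k)
      then have "seg_prod d A0 i n = mat_seg A0 i (i + k - i)"
        using A0_seg_eq[OF i] n by simp
      then show ?thesis
        using A0_decay[rule_format, of i "i + k"] i n Suc that by simp
    qed (use that in simp)
    show "spec_norm (seg_prod d A i n) \<le> spec_norm (seg_prod d A0 i n) +
      (\<Sum>k<n. spec_norm (seg_prod d A (i + k + 1) (n - k - 1)) * \<epsilon> * spec_norm (seg_prod d A0 i k))"
      using spec_norm_seg_prod_perturbation[OF dpos A0 A close i n] .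
  qed (fact e_nonneg eps_nonneg small)+
  have A_seg: "mat_seg A i (j - i) = seg_prod d A i (Suc (j - i))"
    using mat_seg_eq_seg_prod[OF A, of i "j - i"] ij by simp
  show "spec_norm (mat_seg A i (j - i)) \<le> 2 * M"
    unfolding A_seg using ij by (intro a_le_twice_M) auto
  show "spec_norm (mat_seg A i (j - i)) \<le> 5 / 2 * e + 2 * real L ^ 2 * M ^ 3 * \<epsilon> ^ 2"
    if "40 \<le> L" "real (j - i) \<ge> real L / 4"
    unfolding A_seg using ij that by (intro a_le_decay_quarter) auto
qed

section \<open>Size of the error terms\<close>

lemma exp_budget:
  fixes K x c t :: real
  assumes K: "1 \<le> K" and x: "1 \<le> x" and "0 < c" "0 \<le> t"
    and growth: "2 * K ^ 3 * x ^ 11 \<le> exp (0.2 * c * t)"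
  shows "x * (2 * (K * x ^ 3)) * exp (- 0.6 * c * t) \<le> 1"
    and "2 * x ^ 2 * (K * x ^ 3) ^ 3 * exp (- 0.6 * c * t) ^ 2 \<le> exp (- c * t)"
proof -
  have "K \<le> K ^ 3" "x ^ 4 \<le> x ^ 11"
    using K x power_increasing[of 1 3 K] power_increasing[of 4 11 x] by auto
  have "x * (2 * (K * x ^ 3)) = 2 * K * x ^ 4"
    by (simp add: eval_nat_numeral algebra_simps)
  also have "\<dots> \<le> 2 * K ^ 3 * x ^ 11"
    using K \<open>K \<le> K ^ 3\<close> \<open>x ^ 4 \<le> x ^ 11\<close> by (intro mult_mono) auto
  also have "\<dots> \<le> exp (0.2 * c * t)"
    by (fact growth)
  also have "\<dots> \<le> exp (0.6 * c * t)"
    using \<open>0 < c\<close> \<open>0 \<le> t\<close> by (simp add: mult_right_mono)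
  finally have "x * (2 * (K * x ^ 3)) * exp (- 0.6 * c * t) \<le> exp (0.6 * c * t) * exp (- 0.6 * c * t)"
    by (rule mult_right_mono) simp
  then show "x * (2 * (K * x ^ 3)) * exp (- 0.6 * c * t) \<le> 1"
    by (simp add: exp_add[symmetric])
  have "2 * x ^ 2 * (K * x ^ 3) ^ 3 = 2 * K ^ 3 * x ^ 11"
    by (simp add: power_mult_distrib algebra_simps flip: power_mult power_add)
  then have "2 * x ^ 2 * (K * x ^ 3) ^ 3 * exp (- 0.6 * c * t) ^ 2 \<le> exp (0.2 * c * t) * exp (- 0.6 * c * t) ^ 2"
    using growth by (intro mult_right_mono) auto
  also have "\<dots> = exp (- c * t)"
    by (simp add: exp_add[symmetric] flip: exp_of_nat_mult)
  finally show "2 * x ^ 2 * (K * x ^ 3) ^ 3 * exp (- 0.6 * c * t) ^ 2 \<le> exp (- c * t)" .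
qed

theorem lemma5p3:
  fixes \<gamma> c\<^sub>1 K :: real
  assumes "0 < \<gamma>" "\<gamma> \<le> 1" "0 < c\<^sub>1" "1 \<le> K"
  shows "\<exists>L\<^sub>0 K' :: real. \<forall>L :: nat. real L \<ge> L\<^sub>0 \<longrightarrow>
    (\<forall>(d :: nat \<Rightarrow> nat) (A0 :: nat \<Rightarrow> real mat) (A :: nat \<Rightarrow> real mat).
      (\<forall>i \<le> L. 0 < d i) \<longrightarrow>
      (\<forall>i \<in> {1..L}. A0 i \<in> carrier_mat (d i) (d (i - 1)) \<and> A i \<in> carrier_mat (d i) (d (i - 1))) \<longrightarrow>
      (\<forall>i j. 1 \<le> i \<longrightarrow> i \<le> j \<longrightarrow> j \<le> L \<longrightarrow> spec_norm (mat_seg A0 i (j - i)) \<le> K * real L ^ 3) \<longrightarrow>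
      (\<forall>i j. 1 \<le> i \<longrightarrow> i \<le> j \<longrightarrow> j \<le> L \<longrightarrow> real (j - i) \<ge> real L / 10 \<longrightarrow>
          spec_norm (mat_seg A0 i (j - i)) \<le> exp (- c\<^sub>1 * real L powr \<gamma>)) \<longrightarrow>
      (\<forall>i \<in> {1..L}. spec_norm (A i - A0 i) \<le> exp (- 0.6 * c\<^sub>1 * real L powr \<gamma>)) \<longrightarrow>
      (\<forall>i j. 1 \<le> i \<longrightarrow> i \<le> j \<longrightarrow> j \<le> L \<longrightarrow> spec_norm (mat_seg A i (j - i)) \<le> K' * real L ^ 3) \<and>
      (\<forall>i j. 1 \<le> i \<longrightarrow> i \<le> j \<longrightarrow> j \<le> L \<longrightarrow> real (j - i) \<ge> real L / 4 \<longrightarrow>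
          spec_norm (mat_seg A i (j - i)) \<le> K' * exp (- c\<^sub>1 * real L powr \<gamma>)))"
proof -
  have "eventually (\<lambda>x::real. 2 * K ^ 3 * x ^ 11 \<le> exp (0.2 * c\<^sub>1 * x powr \<gamma>)) at_top"
    using assms by real_asymp
  then obtain N where N: "\<And>x. x \<ge> N \<Longrightarrow> 2 * K ^ 3 * x ^ 11 \<le> exp (0.2 * c\<^sub>1 * x powr \<gamma>)"
    by (auto simp: eventually_at_top_linorder)
  show ?thesis
  proof (rule exI[of _ "max N 40"], rule exI[of _ "max (2 * K) 4"], intro allI impI)
    fix L :: nat and d :: "nat \<Rightarrow> nat" and A0 A :: "nat \<Rightarrow> real mat"
    assume L: "max N 40 \<le> real L" and dpos: "\<forall>i \<le> L. 0 < d i"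
      and carriers: "\<forall>i \<in> {1..L}. A0 i \<in> carrier_mat (d i) (d (i - 1)) \<and> A i \<in> carrier_mat (d i) (d (i - 1))"
      and A0_bounds: "\<forall>i j. 1 \<le> i \<longrightarrow> i \<le> j \<longrightarrow> j \<le> L \<longrightarrow> spec_norm (mat_seg A0 i (j - i)) \<le> K * real L ^ 3"
        "\<forall>i j. 1 \<le> i \<longrightarrow> i \<le> j \<longrightarrow> j \<le> L \<longrightarrow> real (j - i) \<ge> real L / 10 \<longrightarrow>
          spec_norm (mat_seg A0 i (j - i)) \<le> exp (- c\<^sub>1 * real L powr \<gamma>)"
      and close: "\<forall>i \<in> {1..L}. spec_norm (A i - A0 i) \<le> exp (- 0.6 * c\<^sub>1 * real L powr \<gamma>)"
    let ?M = "K * real L ^ 3" and ?e = "exp (- c\<^sub>1 * real L powr \<gamma>)"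
      and ?\<epsilon> = "exp (- 0.6 * c\<^sub>1 * real L powr \<gamma>)"
    have chains: "mat_chain L d A0" "mat_chain L d A"
      using carriers unfolding mat_chain_def by auto
    have "1 \<le> real L ^ 3"
      using L by (intro one_le_power) simp
    then have M_ge: "1 \<le> ?M"
      using mult_mono[of 1 K 1 "real L ^ 3"] \<open>1 \<le> K\<close> by simp
    have "1 \<le> real L" "N \<le> real L" "40 \<le> L"
      using L by auto
    note budget = exp_budget[OF \<open>1 \<le> K\<close> \<open>1 \<le> real L\<close> \<open>0 < c\<^sub>1\<close> powr_ge_zero N[OF \<open>N \<le> real L\<close>]]
    note bounds = perturbed_chain_bounds[OF dpos chains A0_bounds close M_ge _ _ budget(1)]
    have twice_M_le: "2 * ?M \<le> max (2 * K) 4 * real L ^ 3"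
      using mult_right_mono[OF max.cobounded1[of "2 * K" 4], of "real L ^ 3"] by simp
    have tail_le: "5 / 2 * ?e + 2 * real L ^ 2 * ?M ^ 3 * ?\<epsilon> ^ 2 \<le> max (2 * K) 4 * ?e"
      using budget(2) mult_right_mono[OF max.cobounded2[of 4 "2 * K"], of ?e] exp_ge_zero[of "- c\<^sub>1 * real L powr \<gamma>"]
      by linarith
    show "(\<forall>i j. 1 \<le> i \<longrightarrow> i \<le> j \<longrightarrow> j \<le> L \<longrightarrow> spec_norm (mat_seg A i (j - i)) \<le> max (2 * K) 4 * real L ^ 3) \<and>
      (\<forall>i j. 1 \<le> i \<longrightarrow> i \<le> j \<longrightarrow> j \<le> L \<longrightarrow> real (j - i) \<ge> real L / 4 \<longrightarrow>
          spec_norm (mat_seg A i (j - i)) \<le> max (2 * K) 4 * exp (- c\<^sub>1 * real L powr \<gamma>))"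
      using order_trans[OF bounds(1) twice_M_le] order_trans[OF bounds(2) tail_le] \<open>40 \<le> L\<close> by auto
  qed
qed

end
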